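(* Let $\gamma>0$ and $\mathbf y^{\mathrm{in}},\mathbf z^{\mathrm{in}}\in\underline{\mathcal Y}(\gamma)$, and let $(\mathbf Y^{(i)})_{i=0}^n$ and $(\mathbf Z^{(i)})_{i=0}^n$ be $\underline{\mathcal Y}_{\mathcal T}(\gamma)$-valued sequences, driven by the same $\mathbf W$, each satisfying the iteration scheme (It), with initial conditions $\mathbf y^{\mathrm{in}}$ and $\mathbf z^{\mathrm{in}}$ respectively. Then almost surely: (a) $\mathbf Y^{(0)}(\cdot)\ge\mathbf Y^{(1)}(\cdot)\ge\cdots\ge\mathbf Y^{(n)}(\cdot)$; (b) if $\mathbf y^{\mathrm{in}}\ge\mathbf z^{\mathrm{in}}$, then $\mathbf Y^{(i)}(\cdot)\ge\mathbf Z^{(i)}(\cdot)$ for $i=0,\dots,n$.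
   Context: Fixed $\beta\ge1$. $\hat{\mathbb Z}=\tfrac12+\mathbb Z$; index intervals use $(i,j)=(j,i)$ if $j<i$; $z_{\mathcal I}:=\sum_{b\in\mathcal I\cap\hat{\mathbb Z}}z_b$; $\mathrm{Av}_{\mathcal I}(\mathbf y)=|\mathcal I\cap\hat{\mathbb Z}|^{-1}\sum_{a\in\mathcal I\cap\hat{\mathbb Z}}y_a$. $\underline{\mathcal Y}(\gamma)=\{\mathbf y\in(0,\infty)^{\hat{\mathbb Z}}:\liminf_{|m|\to\infty}\mathrm{Av}_{(0,m)}(\mathbf y)\ge\gamma\}$; $C_+([0,\infty))=\{y\in C([0,\infty)):y>0\}$; $\underline{\mathcal Y}_{\mathcal T}(\gamma)=\{\mathbf y\in C_+([0,\infty))^{\hat{\mathbb Z}}:\liminf_{|m|\to\infty}\inf_{s\le t}\mathrm{Av}_{(0,m)}(\mathbf y(s))\ge\gamma\ \forall t\}$. $W_a=B_{a+1/2}-B_{a-1/2}$ with independent standard Brownian motions. $\psi_a(y,\mathbf z)=\tfrac12\sum_{i\in\mathbb Z:|i-a|>1}\frac{y}{z_{(a,i)}(y+z_{(a,i)})}$ ($y>0$), $\psi_a(0,\cdot)=0$. Iteration scheme (It) with initial condition $\mathbf y^{\mathrm{in}}$: $Y^{(0)}_a(t)=y^{\mathrm{in}}_a+W_a(t)+\beta\int_0^t\frac{ds}{Y^{(0)}_a(s)}$; for $n\ge1$, $Y^{(n)}_a(t)=y^{\mathrm{in}}_a+W_a(t)+\beta\int_0^t\big(\frac1{Y^{(n)}_a(s)}-\psi_a(Y^{(n)}_a(s),\mathbf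 Y^{(n-1)}(s))\big)ds$, $a\in\hat{\mathbb Z}$. Order: coordinatewise and for all times. *)

theory Defs
  imports "HOL-Probability.Probability"
begin

(* Half-integers \<hat>Z = 1/2 + Z, as a set of reals. Configurations are functions real \<Rightarrow> real,
   of which only the values on \<hat>Z matter. *)
definition hatZ :: "real set" where
  "hatZ = {x. x - 1/2 \<in> \<int>}"

definition oiv :: "real \<Rightarrow> real \<Rightarrow> real set" where
  "oiv i j = {min i j <..< max i j}"

definition zsum :: "real set \<Rightarrow> (real \<Rightarrow> real) \<Rightarrow> real" where
  "zsum I z = (\<Sum>b\<in>I \<inter> hatZ. z b)"

definition Av :: "real set \<Rightarrow> (real \<Rightarrow> real) \<Rightarrow> real" where
  "Av I y = (\<Sum>a\<in>I \<inter> hatZ. y a) / real (card (I \<inter> hatZ))"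

definition Ylow :: "real \<Rightarrow> (real \<Rightarrow> real) set" where
  "Ylow \<gamma> = {y. (\<forall>a\<in>hatZ. 0 < y a) \<and>
     (\<forall>\<epsilon>>0. \<exists>N::int. \<forall>m::int. \<bar>m\<bar> \<ge> N \<longrightarrow> Av (oiv 0 (real_of_int m)) y \<ge> \<gamma> - \<epsilon>)}"

(* underline Y_T(gamma): y a is the trajectory of coordinate a (time \<Rightarrow> value);
   each coordinate in C_+([0,\<infinity>)), and for every t \<ge> 0,
   liminf_{|m|\<rightarrow>\<infinity>} inf_{0\<le>s\<le>t} Av_(0,m)(y(s)) \<ge> gamma *)
definition YlowT :: "real \<Rightarrow> (real \<Rightarrow> real \<Rightarrow> real) set" where
  "YlowT \<gamma> = {y. (\<forall>a\<in>hatZ. continuous_on {0..} (y a) \<and> (\<forall>t\<ge>0. 0 < y a t)) \<and>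
     (\<forall>t\<ge>0. \<forall>\<epsilon>>0. \<exists>N::int. \<forall>m::int. \<bar>m\<bar> \<ge> N \<longrightarrow>
         (INF s\<in>{0..t}. Av (oiv 0 (real_of_int m)) (\<lambda>a. y a s)) \<ge> \<gamma> - \<epsilon>)}"

definition psi :: "real \<Rightarrow> real \<Rightarrow> (real \<Rightarrow> real) \<Rightarrow> real" where
  "psi a y z = (if y = 0 then 0 else
     (1/2) * infsum (\<lambda>i::int. y / (zsum (oiv a (real_of_int i)) z * (y + zsum (oiv a (real_of_int i)) z)))
                    {i::int. \<bar>real_of_int i - a\<bar> > 1})"

definition std_BM :: "'w measure \<Rightarrow> ('w \<Rightarrow> real \<Rightarrow> real) \<Rightarrow> bool" where
  "std_BM M X \<longleftrightarrow>
     (\<forall>t\<ge>0. (\<lambda>\<omega>. X \<omega> t) \<in> borel_measurable M) \<and>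
     (\<forall>\<omega>\<in>space M. X \<omega> 0 = 0 \<and> continuous_on {0..} (X \<omega>)) \<and>
     (\<forall>s t. 0 \<le> s \<and> s < t \<longrightarrow>
        distributed M lborel (\<lambda>\<omega>. X \<omega> t - X \<omega> s) (normal_density 0 (sqrt (t - s)))) \<and>
     (\<forall>ts::real list. sorted_wrt (<) ts \<and> (\<forall>t\<in>set ts. 0 \<le> t) \<longrightarrow>
        prob_space.indep_vars M (\<lambda>_. borel)
          (\<lambda>j \<omega>. X \<omega> (ts ! Suc j) - X \<omega> (ts ! j)) {..<length ts - 1})"

(* independent standard Brownian motions B_k, k \<in> Z (B indexed by reals; only integer indices used) *)
definition indep_BMs :: "'w measure \<Rightarrow> (real \<Rightarrow> 'w \<Rightarrow> real \<Rightarrow> real) \<Rightarrow> bool" where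
  "indep_BMs M B \<longleftrightarrow> (\<forall>k\<in>\<int>. std_BM M (B k)) \<and>
     prob_space.indep_vars M (\<lambda>_. PiM {0..} (\<lambda>_. borel))
       (\<lambda>k \<omega>. restrict (B k \<omega>) {0..}) \<int>"

definition Wdrv :: "(real \<Rightarrow> 'w \<Rightarrow> real \<Rightarrow> real) \<Rightarrow> real \<Rightarrow> 'w \<Rightarrow> real \<Rightarrow> real" where
  "Wdrv B a \<omega> t = B (a + 1/2) \<omega> t - B (a - 1/2) \<omega> t"

(* The iteration scheme (It) for a single path: Y i a t, i = 0..n, driven by the path W a t,
   initial condition yin.  The integrals are required to exist (Henstock-Kurzweil). *)
definition It_scheme :: "real \<Rightarrow> nat \<Rightarrow> (real \<Rightarrow> real) \<Rightarrow> (real \<Rightarrow> real \<Rightarrow> real)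
     \<Rightarrow> (nat \<Rightarrow> real \<Rightarrow> real \<Rightarrow> real) \<Rightarrow> bool" where
  "It_scheme \<beta> n yin W Y \<longleftrightarrow>
     (\<forall>a\<in>hatZ. \<forall>t\<ge>0.
        (\<lambda>s. 1 / Y 0 a s) integrable_on {0..t} \<and>
        Y 0 a t = yin a + W a t + \<beta> * integral {0..t} (\<lambda>s. 1 / Y 0 a s)) \<and>
     (\<forall>i. 1 \<le> i \<and> i \<le> n \<longrightarrow> (\<forall>a\<in>hatZ. \<forall>t\<ge>0.
        (\<lambda>s. 1 / Y i a s - psi a (Y i a s) (\<lambda>b. Y (i - 1) b s)) integrable_on {0..t} \<and>
        Y i a t = yin a + W a t +
          \<beta> * integral {0..t} (\<lambda>s. 1 / Y i a s - psi a (Y i a s) (\<lambda>b. Y (i - 1) b s))))"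

end

theory Submission
  imports Defs
begin

(* Each level Y^(i)_a of (It) solves an integral equation U = u0 + W + beta * int drift, and two
   such equations driven by the same path W are ordered as soon as the initial values are ordered
   and the drift of the lower one is dominated by that of the upper one wherever their order is
   violated (barrier argument for continuous functions).  The drift 1/y - psi_a(y, z) is antitone
   in y and monotone in the configuration z; the latter needs the series defining psi to
   converge, which follows from z in Ylow(gamma): the mass z_(a,i) grows linearly in |i|, so
   the terms of psi are O(1/i^2). *)

lemma summable_inverse_square_int: "(\<lambda>i::int. 1 / (real_of_int i)^2) summable_on UNIV"
proof -
  have "summable (\<lambda>n. inverse (real n ^ 2))" by (rule inverse_power_summable) simp
  then have nat: "(\<lambda>n::nat. 1 / (real n)^2) summable_on UNIV"
    by (subst summable_on_UNIV_nonneg_real_iff) (auto simp: field_simps)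
  have pos: "(\<lambda>i::int. 1 / (real_of_int i)^2) summable_on range int"
    by (subst summable_on_reindex) (auto simp: o_def nat)
  have neg: "(\<lambda>i::int. 1 / (real_of_int i)^2) summable_on range (\<lambda>n. - int n)"
    by (subst summable_on_reindex) (auto simp: o_def nat inj_on_def)
  have "UNIV = range int \<union> range (\<lambda>n. - int n)"
  proof (intro set_eqI iffI)
    fix i :: int
    show "i \<in> range int \<union> range (\<lambda>n. - int n)"
      by (cases "0 \<le> i") (auto intro: image_eqI[of _ _ "nat i"] image_eqI[of _ _ "nat (-i)"])
  qed simp
  then show ?thesis using summable_on_union[OF pos neg] by simp
qed

lemma finite_bounded_hatZ:
  assumes "bounded I"
  shows "finite (I \<inter> hatZ)"
proof -
  obtain R where R: "\<And>x. x \<in> I \<Longrightarrow> \<bar>x\<bar> \<le> R" using assms bounded_real by blast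
  have "I \<inter> hatZ \<subseteq> (\<lambda>k::int. real_of_int k + 1/2) ` {\<lfloor>-R\<rfloor> - 1..\<lceil>R\<rceil>}"
  proof
    fix x assume x: "x \<in> I \<inter> hatZ"
    then obtain k where k: "x - 1/2 = real_of_int k" by (auto simp: hatZ_def elim!: Ints_cases)
    have "\<bar>x\<bar> \<le> R" using x R by blast
    then have "k \<in> {\<lfloor>-R\<rfloor> - 1..\<lceil>R\<rceil>}" using k by (auto simp: floor_le_iff le_ceiling_iff) linarith+
    moreover have "x = real_of_int k + 1/2" using k by simp
    ultimately show "x \<in> (\<lambda>k::int. real_of_int k + 1/2) ` {\<lfloor>-R\<rfloor> - 1..\<lceil>R\<rceil>}" by blast
  qed
  then show ?thesis by (rule finite_subset) simp
qed

lemma finite_oiv_hatZ: "finite (oiv a b \<inter> hatZ)"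
  by (rule finite_bounded_hatZ) (simp add: oiv_def)

text \<open>The index interval \<open>(0,m)\<close> contains at least \<open>|m|\<close> half-integers, namely \<open>\<plusminus>(k + 1/2)\<close>, \<open>k < |m|\<close>.\<close>
lemma card_oiv_origin: "nat \<bar>m\<bar> \<le> card (oiv 0 (real_of_int m) \<inter> hatZ)"
proof -
  define h where "h = (\<lambda>k::nat. sgn (real_of_int m) * (real k + 1/2))"
  have "inj_on h {..<nat \<bar>m\<bar>}"
    by (auto simp: inj_on_def h_def sgn_if split: if_splits)
  moreover have "h ` {..<nat \<bar>m\<bar>} \<subseteq> oiv 0 (real_of_int m) \<inter> hatZ"
  proof
    fix x assume "x \<in> h ` {..<nat \<bar>m\<bar>}"
    then obtain k where k: "k < nat \<bar>m\<bar>" "x = h k" by auto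
    show "x \<in> oiv 0 (real_of_int m) \<inter> hatZ"
    proof (cases "m > 0")
      case True
      then have "real k + 1 \<le> real_of_int m" using k by linarith
      then show ?thesis using True k by (auto simp: h_def oiv_def hatZ_def min_def max_def)
    next
      case False
      then have "m < 0" using k by simp
      then have "real k + 1 \<le> - real_of_int m" using k by linarith
      moreover have "- (real k + 1/2) - 1/2 = real_of_int (- int k - 1)" by simp
      ultimately show ?thesis using \<open>m < 0\<close> k
        by (auto simp: h_def oiv_def hatZ_def min_def max_def simp del: of_int_diff of_int_minus)
    qed
  qed
  ultimately show ?thesis using card_inj_on_le finite_oiv_hatZ by (metis card_lessThan)
qed

lemma zsum_nonneg: "(\<And>b. b \<in> hatZ \<Longrightarrow> 0 \<le> c b) \<Longrightarrow> 0 \<le> zsum I c"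
  unfolding zsum_def by (intro sum_nonneg) auto

lemma zsum_origin_lower:
  assumes "\<delta> \<le> Av (oiv 0 (real_of_int m)) c" and "0 \<le> \<delta>"
  shows "\<delta> * \<bar>real_of_int m\<bar> \<le> zsum (oiv 0 (real_of_int m)) c"
proof -
  let ?A = "oiv 0 (real_of_int m) \<inter> hatZ"
  have card: "\<bar>real_of_int m\<bar> \<le> real (card ?A)"
    using card_oiv_origin[of m] by (metis of_int_abs of_int_of_nat_eq of_nat_mono nat_0_le abs_ge_zero)
  show ?thesis
  proof (cases "card ?A = 0")
    case True
    then have "?A = {}" using finite_oiv_hatZ by simp
    then show ?thesis using card by (simp add: zsum_def)
  next
    case False
    then have "\<delta> * real (card ?A) \<le> sum c ?A" using assms(1) by (simp add: Av_def field_simps)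
    moreover have "\<delta> * \<bar>real_of_int m\<bar> \<le> \<delta> * real (card ?A)" using card assms(2) by (rule mult_left_mono)
    ultimately show ?thesis by (simp add: zsum_def Int_commute)
  qed
qed

lemma zsum_recentre:
  assumes "\<And>b. b \<in> hatZ \<Longrightarrow> 0 \<le> c b"
  shows "zsum (oiv 0 m) c \<le> zsum (oiv a m) c + zsum {-\<bar>a\<bar>..\<bar>a\<bar>} c"
proof -
  let ?A0 = "oiv 0 m \<inter> hatZ" and ?Aa = "oiv a m \<inter> hatZ" and ?K = "{-\<bar>a\<bar>..\<bar>a\<bar>} \<inter> hatZ"
  have fK: "finite ?K" by (rule finite_bounded_hatZ) simp
  have "?A0 \<subseteq> ?Aa \<union> ?K" by (auto simp: oiv_def min_def max_def split: if_splits)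
  then have "sum c ?A0 \<le> sum c (?Aa \<union> ?K)"
    using assms fK finite_oiv_hatZ by (intro sum_mono2) auto
  also have "\<dots> = sum c ?Aa + sum c ?K - sum c (?Aa \<inter> ?K)"
    using fK finite_oiv_hatZ by (simp add: sum_Un)
  also have "\<dots> \<le> sum c ?Aa + sum c ?K"
    using assms by (auto intro!: sum_nonneg)
  finally show ?thesis by (simp add: zsum_def Int_commute)
qed

lemma zsum_linear_growth:
  assumes c: "c \<in> Ylow \<gamma>" and g: "0 < \<gamma>"
  shows "\<exists>N::int. \<forall>m::int. N \<le> \<bar>m\<bar> \<longrightarrow> \<gamma>/4 * \<bar>real_of_int m\<bar> \<le> zsum (oiv a (real_of_int m)) c"
proof -
  have cnn: "\<And>b. b \<in> hatZ \<Longrightarrow> 0 \<le> c b" using c by (auto simp: Ylow_def less_imp_le)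
  obtain N :: int where N: "\<And>m::int. N \<le> \<bar>m\<bar> \<Longrightarrow> \<gamma> - \<gamma>/2 \<le> Av (oiv 0 (real_of_int m)) c"
    using c half_gt_zero[OF g] unfolding Ylow_def by blast
  define C where "C = zsum {-\<bar>a\<bar>..\<bar>a\<bar>} c"
  show ?thesis
  proof (intro exI allI impI)
    fix m :: int assume m: "max N \<lceil>4 * C / \<gamma>\<rceil> \<le> \<bar>m\<bar>"
    have "\<gamma>/2 * \<bar>real_of_int m\<bar> \<le> zsum (oiv 0 (real_of_int m)) c"
      using N[of m] m g by (intro zsum_origin_lower) auto
    also have "\<dots> \<le> zsum (oiv a (real_of_int m)) c + C"
      unfolding C_def using cnn by (rule zsum_recentre)
    finally have "\<gamma>/2 * \<bar>real_of_int m\<bar> \<le> zsum (oiv a (real_of_int m)) c + C" .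
    moreover have "4 * C / \<gamma> \<le> \<bar>real_of_int m\<bar>" using m by linarith
    then have "C \<le> \<gamma>/4 * \<bar>real_of_int m\<bar>" using g by (simp add: field_simps)
    ultimately show "\<gamma>/4 * \<bar>real_of_int m\<bar> \<le> zsum (oiv a (real_of_int m)) c" by linarith
  qed
qed

text \<open>Consequently the series defining \<open>psi a y c\<close> converges absolutely when \<open>c \<in> Ylow \<gamma>\<close>: its terms
  are eventually bounded by \<open>16 y / (\<gamma>\<^sup>2 i\<^sup>2)\<close>.\<close>
lemma psi_series_summable:
  assumes c: "c \<in> Ylow \<gamma>" and g: "0 < \<gamma>" and y: "0 \<le> y"
  shows "(\<lambda>i::int. y / (zsum (oiv a (real_of_int i)) c * (y + zsum (oiv a (real_of_int i)) c)))
           summable_on UNIV"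
proof -
  let ?Z = "\<lambda>i::int. zsum (oiv a (real_of_int i)) c"
  let ?f = "\<lambda>i. y / (?Z i * (y + ?Z i))"
  obtain N where N: "\<And>m. N \<le> \<bar>m\<bar> \<Longrightarrow> \<gamma>/4 * \<bar>real_of_int m\<bar> \<le> ?Z m"
    using zsum_linear_growth[OF c g] by blast
  define N' where "N' = max N 1"
  have near: "?f summable_on {i. \<bar>i\<bar> < N'}"
    by (rule summable_on_finite, rule finite_subset[of _ "{-N'..N'}"]) auto
  have dominant: "(\<lambda>i::int. 16 * y / \<gamma>^2 * (1 / (real_of_int i)^2)) summable_on {i. N' \<le> \<bar>i\<bar>}"
    using summable_on_cmult_right[OF summable_inverse_square_int] by (rule summable_on_subset_banach) simp
  have far: "?f summable_on {i. N' \<le> \<bar>i\<bar>}"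
  proof (rule summable_on_comparison_test[OF dominant])
    fix i assume "i \<in> {i. N' \<le> \<bar>i\<bar>}"
    then have i: "N \<le> \<bar>i\<bar>" "1 \<le> \<bar>i\<bar>" unfolding N'_def by auto
    define q where "q = \<gamma>/4 * \<bar>real_of_int i\<bar>"
    have q: "0 < q" "q \<le> ?Z i" using N[OF i(1)] i(2) g unfolding q_def by (auto simp flip: of_int_abs)
    have "?f i \<le> y / (?Z i * ?Z i)"
      using q y by (intro divide_left_mono mult_left_mono mult_pos_pos) auto
    also have "\<dots> \<le> y / (q * q)"
      using q y by (intro divide_left_mono mult_mono mult_pos_pos) auto
    also have "\<dots> = 16 * y / \<gamma>^2 * (1 / (real_of_int i)^2)"
      unfolding q_def using g by (simp add: field_simps power2_eq_square)
    finally show "?f i \<le> 16 * y / \<gamma>^2 * (1 / (real_of_int i)^2)" .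
    show "0 \<le> ?f i" using q y by auto
  qed
  have "UNIV = {i. \<bar>i\<bar> < N'} \<union> {i. N' \<le> \<bar>i\<bar>}" by auto
  then show ?thesis using summable_on_union[OF near far] by simp
qed

lemma psi_nonneg:
  assumes "\<And>b. b \<in> hatZ \<Longrightarrow> 0 \<le> c b" and "0 \<le> y"
  shows "0 \<le> psi a y c"
  using assms zsum_nonneg[of c] unfolding psi_def
  by (auto intro!: infsum_nonneg mult_nonneg_nonneg divide_nonneg_nonneg)

lemma psi_term_mono:
  fixes y y' Z Z' :: real
  assumes "0 < y" "y \<le> y'" "0 < Z'" "Z' \<le> Z"
  shows "y / (Z * (y + Z)) \<le> y' / (Z' * (y' + Z'))"
proof -
  have pos: "0 < Z * (y + Z)" "0 < Z' * (y' + Z')" using assms by auto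
  have "y * y' * Z' \<le> y * y' * Z" using assms by (intro mult_left_mono) auto
  moreover have "y * (Z' * Z') \<le> y' * (Z * Z)" using assms by (intro mult_mono) (auto intro: mult_mono)
  ultimately have "y * (Z' * (y' + Z')) \<le> y' * (Z * (y + Z))" by (simp add: algebra_simps)
  then show ?thesis using pos by (simp add: divide_simps mult.commute)
qed

text \<open>Convergence of the larger series comes from the lower configuration \<open>z'\<close> lying in \<open>Ylow \<gamma>\<close>.\<close>
lemma psi_mono:
  assumes g: "0 < \<gamma>" and z': "z' \<in> Ylow \<gamma>" and zz': "\<forall>b\<in>hatZ. z' b \<le> z b"
    and y: "0 < y" "y \<le> y'"
  shows "psi a y z \<le> psi a y' z'"
proof -
  have z'pos: "\<And>b. b \<in> hatZ \<Longrightarrow> 0 < z' b" using z' by (simp add: Ylow_def)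
  let ?A = "{i::int. 1 < \<bar>real_of_int i - a\<bar>}"
  let ?f = "\<lambda>i::int. y / (zsum (oiv a (real_of_int i)) z * (y + zsum (oiv a (real_of_int i)) z))"
  let ?g = "\<lambda>i::int. y' / (zsum (oiv a (real_of_int i)) z' * (y' + zsum (oiv a (real_of_int i)) z'))"
  have le: "?f i \<le> ?g i" for i
  proof (cases "oiv a (real_of_int i) \<inter> hatZ = {}")
    case True
    then show ?thesis by (simp add: zsum_def)
  next
    case False
    then have "0 < zsum (oiv a (real_of_int i)) z'"
      unfolding zsum_def using z'pos finite_oiv_hatZ by (intro sum_pos) auto
    moreover have "zsum (oiv a (real_of_int i)) z' \<le> zsum (oiv a (real_of_int i)) z"
      unfolding zsum_def using zz' by (intro sum_mono) auto
    ultimately show ?thesis using y by (intro psi_term_mono) auto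
  qed
  have "\<And>b. b \<in> hatZ \<Longrightarrow> 0 \<le> z b" using z'pos zz' by (meson less_imp_le order_trans)
  then have nn: "0 \<le> ?f i" for i
    using y zsum_nonneg[of z "oiv a (real_of_int i)"] by (intro divide_nonneg_nonneg mult_nonneg_nonneg) auto
  have "?g summable_on UNIV" using z' g y by (intro psi_series_summable) auto
  then have gs: "?g summable_on ?A" by (rule summable_on_subset_banach) simp
  have fs: "?f summable_on ?A" by (rule summable_on_comparison_test[OF gs]) (use le nn in auto)
  have "infsum ?f ?A \<le> infsum ?g ?A" by (rule infsum_mono[OF fs gs le])
  then show ?thesis using y unfolding psi_def by auto
qed

lemma drift_mono:
  assumes "0 < \<gamma>" "z' \<in> Ylow \<gamma>" "\<forall>b\<in>hatZ. z' b \<le> z b" "0 < y" "y \<le> y'"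
  shows "1 / y' - psi a y' z' \<le> 1 / y - psi a y z"
proof -
  have "1 / y' \<le> 1 / y" using assms(4,5) by (intro divide_left_mono) auto
  then show ?thesis using psi_mono[OF assms, of a] by linarith
qed

lemma continuous_stays_nonneg:
  fixes D :: "real \<Rightarrow> real"
  assumes cont: "continuous_on {0..} D" and D0: "0 \<le> D 0"
    and no_descent: "\<And>u t. 0 \<le> u \<Longrightarrow> u \<le> t \<Longrightarrow> \<forall>s\<in>{u..t}. D s \<le> 0 \<Longrightarrow> D u \<le> D t"
    and t: "0 \<le> t"
  shows "0 \<le> D t"
proof (rule ccontr)
  assume neg: "\<not> 0 \<le> D t"
  define S where "S = {s \<in> {0..t}. 0 \<le> D s}"
  have "continuous_on {0..t} D" using cont by (rule continuous_on_subset) auto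
  then have "closed ({0..t} \<inter> D -` {0..})" by (rule continuous_closed_preimage) auto
  moreover have "S = {0..t} \<inter> D -` {0..}" by (auto simp: S_def)
  ultimately have "closed S" by simp
  moreover have "S \<noteq> {}" "bdd_above S" using D0 t by (auto simp: S_def bdd_above_def)
  ultimately have "Sup S \<in> S" using closed_contains_Sup by blast
  text \<open>\<open>t\<^sub>0\<close> is the last time in \<open>[0,t]\<close> at which \<open>D\<close> is nonnegative.\<close>
  define t0 where "t0 = Sup S"
  have t0: "0 \<le> t0" "t0 < t" "0 \<le> D t0"
    using \<open>Sup S \<in> S\<close> neg unfolding t0_def S_def by (auto simp: less_le)
  have after: "D s < 0" if "t0 < s" "s \<le> t" for s
  proof (rule ccontr)
    assume "\<not> D s < 0"
    then have "s \<in> S" using t0 that by (auto simp: S_def)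
    then have "s \<le> t0" unfolding t0_def using \<open>bdd_above S\<close> by (rule cSup_upper)
    then show False using that by simp
  qed
  text \<open>By continuity \<open>D\<close> stays above \<open>D t\<close> slightly after \<open>t\<^sub>0\<close>, yet cannot decrease from there to \<open>t\<close>.\<close>
  obtain d where d: "0 < d" "\<And>x. x \<in> {0..} \<Longrightarrow> dist x t0 < d \<Longrightarrow> dist (D x) (D t0) < - D t"
    using cont t0 neg unfolding continuous_on_iff by (metis atLeast_iff neg_0_less_iff_less not_le)
  define u where "u = min (t0 + d/2) t"
  have u: "t0 < u" "u \<le> t" "dist u t0 < d" using d t0 by (auto simp: u_def dist_real_def)
  then have "dist (D u) (D t0) < - D t" using d(2)[of u] t0 by auto
  then have "D t < D u" using t0 by (auto simp: dist_real_def)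
  moreover have "\<forall>s\<in>{u..t}. D s \<le> 0" using after u by (auto intro: less_imp_le)
  then have "D u \<le> D t" using no_descent[of u t] u t0 by simp
  ultimately show False by simp
qed

lemma integral_equation_comparison:
  fixes U V f g w :: "real \<Rightarrow> real" and \<beta> u0 v0 t :: real
  assumes cU: "continuous_on {0..} U" and cV: "continuous_on {0..} V" and \<beta>: "0 \<le> \<beta>"
    and fi: "\<And>t. 0 \<le> t \<Longrightarrow> f integrable_on {0..t}"
    and gi: "\<And>t. 0 \<le> t \<Longrightarrow> g integrable_on {0..t}"
    and U: "\<And>t. 0 \<le> t \<Longrightarrow> U t = u0 + w t + \<beta> * integral {0..t} f"
    and V: "\<And>t. 0 \<le> t \<Longrightarrow> V t = v0 + w t + \<beta> * integral {0..t} g"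
    and init: "v0 \<le> u0"
    and drift: "\<And>s. 0 \<le> s \<Longrightarrow> U s \<le> V s \<Longrightarrow> g s \<le> f s"
    and t: "0 \<le> t"
  shows "V t \<le> U t"
proof -
  define D where "D = (\<lambda>t. U t - V t)"
  have split: "integral {0..t} h = integral {0..u} h + integral {u..t} h"
    if "h integrable_on {0..t}" "0 \<le> u" "u \<le> t" for h :: "real \<Rightarrow> real" and u t
    using Henstock_Kurzweil_Integration.integral_combine[where f = h and a = 0 and c = u and b = t] that
    by simp
  have "0 \<le> D t"
  proof (rule continuous_stays_nonneg[OF _ _ _ t])
    show "continuous_on {0..} D" unfolding D_def using cU cV by (intro continuous_intros)
    show "0 \<le> D 0" unfolding D_def using U[of 0] V[of 0] init by simp
    show "D u \<le> D t" if u: "0 \<le> u" "u \<le> t" "\<forall>s\<in>{u..t}. D s \<le> 0" for u t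
    proof -
      have fg: "f integrable_on {u..t}" "g integrable_on {u..t}"
        using integrable_subinterval_real[OF fi, of t u t] integrable_subinterval_real[OF gi, of t u t] u
        by auto
      have "0 \<le> integral {u..t} (\<lambda>s. f s - g s)"
      proof (rule integral_nonneg)
        show "(\<lambda>s. f s - g s) integrable_on {u..t}" using fg by (rule integrable_diff)
        fix s assume "s \<in> {u..t}"
        then show "0 \<le> f s - g s" using drift[of s] u unfolding D_def by auto
      qed
      then have "0 \<le> \<beta> * (integral {u..t} f - integral {u..t} g)"
        using \<beta> integral_diff[OF fg] by simp
      moreover have "D t = D u + \<beta> * (integral {u..t} f - integral {u..t} g)"
        unfolding D_def using U[of t] V[of t] U[of u] V[of u] u split[OF fi, of t u] split[OF gi, of t u]
        by (simp add: algebra_simps)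
      ultimately show ?thesis by linarith
    qed
  qed
  then show ?thesis unfolding D_def by simp
qed

definition drift :: "(nat \<Rightarrow> real \<Rightarrow> real \<Rightarrow> real) \<Rightarrow> nat \<Rightarrow> real \<Rightarrow> real \<Rightarrow> real" where
  "drift Y i a s = (if i = 0 then 1 / Y 0 a s else 1 / Y i a s - psi a (Y i a s) (\<lambda>b. Y (i - 1) b s))"

lemma It_scheme_drift:
  assumes "It_scheme \<beta> n yin W Y" "i \<le> n" "a \<in> hatZ" "0 \<le> t"
  shows "drift Y i a integrable_on {0..t}"
    and "Y i a t = yin a + W a t + \<beta> * integral {0..t} (drift Y i a)"
proof -
  have "drift Y i a integrable_on {0..t} \<and> Y i a t = yin a + W a t + \<beta> * integral {0..t} (drift Y i a)"
  proof (cases i)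
    case 0
    then have "drift Y i a = (\<lambda>s. 1 / Y 0 a s)" by (simp add: drift_def fun_eq_iff)
    then show ?thesis using assms 0 unfolding It_scheme_def by auto
  next
    case (Suc j)
    then have "drift Y i a = (\<lambda>s. 1 / Y i a s - psi a (Y i a s) (\<lambda>b. Y (i - 1) b s))"
      by (simp add: drift_def fun_eq_iff)
    moreover have "1 \<le> i" using Suc by simp
    ultimately show ?thesis using assms unfolding It_scheme_def by auto
  qed
  then show "drift Y i a integrable_on {0..t}"
    and "Y i a t = yin a + W a t + \<beta> * integral {0..t} (drift Y i a)" by auto
qed

lemma scheme_comparison:
  assumes Y: "It_scheme \<beta> n yin W Y" and Z: "It_scheme \<beta> n zin W Z" and \<beta>: "0 \<le> \<beta>"
    and i: "i \<le> n" and k: "k \<le> n" and a: "a \<in> hatZ"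
    and cY: "continuous_on {0..} (Y i a)" and cZ: "continuous_on {0..} (Z k a)"
    and init: "zin a \<le> yin a"
    and step: "\<And>s. 0 \<le> s \<Longrightarrow> Y i a s \<le> Z k a s \<Longrightarrow> drift Z k a s \<le> drift Y i a s"
    and t: "0 \<le> t"
  shows "Z k a t \<le> Y i a t"
  by (rule integral_equation_comparison[where w = "W a", OF cY cZ \<beta> _ _ _ _ init step t])
    (use It_scheme_drift[OF Y i a] It_scheme_drift[OF Z k a] in auto)

lemma YlowT_continuous: "y \<in> YlowT \<gamma> \<Longrightarrow> a \<in> hatZ \<Longrightarrow> continuous_on {0..} (y a)"
  by (simp add: YlowT_def)

lemma YlowT_slice:
  assumes y: "y \<in> YlowT \<gamma>" and s: "0 \<le> s"
  shows "(\<lambda>a. y a s) \<in> Ylow \<gamma>"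
  unfolding Ylow_def
proof (intro CollectI conjI allI impI)
  have pos: "\<And>a s. a \<in> hatZ \<Longrightarrow> 0 \<le> s \<Longrightarrow> 0 < y a s" using y by (auto simp: YlowT_def)
  then show "\<forall>a\<in>hatZ. 0 < y a s" using s by simp
  fix \<epsilon> :: real assume "0 < \<epsilon>"
  then obtain N :: int where N: "\<And>m::int. N \<le> \<bar>m\<bar> \<Longrightarrow>
      \<gamma> - \<epsilon> \<le> (INF s'\<in>{0..s}. Av (oiv 0 (real_of_int m)) (\<lambda>a. y a s'))"
    using y s unfolding YlowT_def by blast
  show "\<exists>N::int. \<forall>m::int. N \<le> \<bar>m\<bar> \<longrightarrow> \<gamma> - \<epsilon> \<le> Av (oiv 0 (real_of_int m)) (\<lambda>a. y a s)"
  proof (intro exI allI impI)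
    fix m :: int assume "N \<le> \<bar>m\<bar>"
    have "0 \<le> Av (oiv 0 (real_of_int m)) (\<lambda>a. y a s')" if "s' \<in> {0..s}" for s'
      unfolding Av_def using pos that by (intro divide_nonneg_nonneg sum_nonneg) (auto intro: less_imp_le)
    then have "bdd_below ((\<lambda>s'. Av (oiv 0 (real_of_int m)) (\<lambda>a. y a s')) ` {0..s})"
      by (intro bdd_belowI[of _ 0]) auto
    then have "(INF s'\<in>{0..s}. Av (oiv 0 (real_of_int m)) (\<lambda>a. y a s'))
        \<le> Av (oiv 0 (real_of_int m)) (\<lambda>a. y a s)" using s by (intro cINF_lower) auto
    then show "\<gamma> - \<epsilon> \<le> Av (oiv 0 (real_of_int m)) (\<lambda>a. y a s)" using N[OF \<open>N \<le> \<bar>m\<bar>\<close>] by linarith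
  qed
qed

text \<open>Level 1 lies below level 0 because psi is
  nonnegative; for higher levels, monotonicity of the drift propagates the previous inequality.\<close>
lemma iterates_decreasing:
  assumes \<beta>: "0 \<le> \<beta>" and g: "0 < \<gamma>" and YT: "\<forall>i\<le>n. Y i \<in> YlowT \<gamma>"
    and Y: "It_scheme \<beta> n yin W Y"
  shows "i < n \<Longrightarrow> a \<in> hatZ \<Longrightarrow> 0 \<le> t \<Longrightarrow> Y (Suc i) a t \<le> Y i a t"
proof (induction i arbitrary: a t)
  case 0
  show ?case
  proof (rule scheme_comparison[OF Y Y \<beta> _ _ \<open>a \<in> hatZ\<close>])
    fix s :: real assume s: "0 \<le> s" and le: "Y 0 a s \<le> Y (Suc 0) a s"
    have Y0: "(\<lambda>b. Y 0 b s) \<in> Ylow \<gamma>" using YT s by (intro YlowT_slice) auto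
    then have pos: "0 < Y 0 a s" using 0 by (simp add: Ylow_def)
    have "0 \<le> psi a (Y (Suc 0) a s) (\<lambda>b. Y 0 b s)"
      using Y0 pos le by (intro psi_nonneg) (auto simp: Ylow_def)
    moreover have "1 / Y (Suc 0) a s \<le> 1 / Y 0 a s" using pos le by (intro divide_left_mono) auto
    ultimately show "drift Y (Suc 0) a s \<le> drift Y 0 a s" by (simp add: drift_def)
  qed (use 0 YT in \<open>auto intro: YlowT_continuous[of _ \<gamma>]\<close>)
next
  case (Suc j)
  show ?case
  proof (rule scheme_comparison[OF Y Y \<beta> _ _ \<open>a \<in> hatZ\<close>])
    fix s :: real assume s: "0 \<le> s" and le: "Y (Suc j) a s \<le> Y (Suc (Suc j)) a s"
    have Y1: "(\<lambda>b. Y (Suc j) b s) \<in> Ylow \<gamma>" using YT s Suc.prems by (intro YlowT_slice) auto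
    then have pos: "0 < Y (Suc j) a s" using Suc.prems by (simp add: Ylow_def)
    have "\<forall>b\<in>hatZ. Y (Suc j) b s \<le> Y j b s" using Suc s by simp
    then show "drift Y (Suc (Suc j)) a s \<le> drift Y (Suc j) a s"
      using drift_mono[OF g Y1 _ pos le] by (simp add: drift_def)
  qed (use Suc.prems YT in \<open>auto intro: YlowT_continuous[of _ \<gamma>]\<close>)
qed

lemma iterates_monotone_initial:
  assumes \<beta>: "0 \<le> \<beta>" and g: "0 < \<gamma>"
    and YT: "\<forall>i\<le>n. Y i \<in> YlowT \<gamma>" and Y: "It_scheme \<beta> n yin W Y"
    and ZT: "\<forall>i\<le>n. Z i \<in> YlowT \<gamma>" and Z: "It_scheme \<beta> n zin W Z"
    and init: "\<forall>a\<in>hatZ. zin a \<le> yin a"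
  shows "i \<le> n \<Longrightarrow> a \<in> hatZ \<Longrightarrow> 0 \<le> t \<Longrightarrow> Z i a t \<le> Y i a t"
proof (induction i arbitrary: a t)
  case 0
  show ?case
  proof (rule scheme_comparison[OF Y Z \<beta> _ _ \<open>a \<in> hatZ\<close>])
    fix s :: real assume s: "0 \<le> s" and le: "Y 0 a s \<le> Z 0 a s"
    have "(\<lambda>b. Y 0 b s) \<in> Ylow \<gamma>" using YT s by (intro YlowT_slice) auto
    then have "0 < Y 0 a s" using 0 by (simp add: Ylow_def)
    then show "drift Z 0 a s \<le> drift Y 0 a s" using le by (simp add: drift_def divide_left_mono)
  qed (use 0 YT ZT init in \<open>auto intro: YlowT_continuous[of _ \<gamma>]\<close>)
next
  case (Suc j)
  show ?case
  proof (rule scheme_comparison[OF Y Z \<beta> _ _ \<open>a \<in> hatZ\<close>])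
    fix s :: real assume s: "0 \<le> s" and le: "Y (Suc j) a s \<le> Z (Suc j) a s"
    have Z0: "(\<lambda>b. Z j b s) \<in> Ylow \<gamma>" using ZT s Suc.prems by (intro YlowT_slice) auto
    have "(\<lambda>b. Y (Suc j) b s) \<in> Ylow \<gamma>" using YT s Suc.prems by (intro YlowT_slice) auto
    then have pos: "0 < Y (Suc j) a s" using Suc.prems by (simp add: Ylow_def)
    have "\<forall>b\<in>hatZ. Z j b s \<le> Y j b s" using Suc s by simp
    then show "drift Z (Suc j) a s \<le> drift Y (Suc j) a s"
      using drift_mono[OF g Z0 _ pos le] by (simp add: drift_def)
  qed (use Suc.prems YT ZT init in \<open>auto intro: YlowT_continuous[of _ \<gamma>]\<close>)
qed

theorem proposition3p1:
  fixes M :: "'w measure" and B :: "real \<Rightarrow> 'w \<Rightarrow> real \<Rightarrow> real"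
    and \<beta> \<gamma> :: real and n :: nat and yin zin :: "real \<Rightarrow> real"
    and Y Z :: "nat \<Rightarrow> 'w \<Rightarrow> real \<Rightarrow> real \<Rightarrow> real"
  assumes "prob_space M"
    and "indep_BMs M B"
    and "\<beta> \<ge> 1" and "\<gamma> > 0"
    and "yin \<in> Ylow \<gamma>" and "zin \<in> Ylow \<gamma>"
    and "AE \<omega> in M. (\<forall>i\<le>n. Y i \<omega> \<in> YlowT \<gamma>) \<and> It_scheme \<beta> n yin (\<lambda>a. Wdrv B a \<omega>) (\<lambda>i. Y i \<omega>)"
    and "AE \<omega> in M. (\<forall>i\<le>n. Z i \<omega> \<in> YlowT \<gamma>) \<and> It_scheme \<beta> n zin (\<lambda>a. Wdrv B a \<omega>) (\<lambda>i. Z i \<omega>)"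
  shows "AE \<omega> in M.
           (\<forall>i<n. \<forall>a\<in>hatZ. \<forall>t\<ge>0. Y i \<omega> a t \<ge> Y (Suc i) \<omega> a t) \<and>
           ((\<forall>a\<in>hatZ. yin a \<ge> zin a) \<longrightarrow>
              (\<forall>i\<le>n. \<forall>a\<in>hatZ. \<forall>t\<ge>0. Y i \<omega> a t \<ge> Z i \<omega> a t))"
  using assms(7,8)
proof eventually_elim
  case (elim \<omega>)
  then have YT: "\<forall>i\<le>n. Y i \<omega> \<in> YlowT \<gamma>" and Y: "It_scheme \<beta> n yin (\<lambda>a. Wdrv B a \<omega>) (\<lambda>i. Y i \<omega>)"
    and ZT: "\<forall>i\<le>n. Z i \<omega> \<in> YlowT \<gamma>" and Z: "It_scheme \<beta> n zin (\<lambda>a. Wdrv B a \<omega>) (\<lambda>i. Z i \<omega>)"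
    by auto
  have \<beta>: "0 \<le> \<beta>" using assms(3) by simp
  show ?case
    using iterates_decreasing[OF \<beta> assms(4) YT Y] iterates_monotone_initial[OF \<beta> assms(4) YT Y ZT Z]
    by blast
qed

end
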